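(* Let $G_i=(V_i,E_i)$ be a graph of minimum degree $\delta_i$ and maximum degree $\Delta_i$, $i\in\{1,2\}$. For integers $k_1,k_2$, let $S_i$ be a $k_i$-oaf set in $G_i$, $i\in\{1,2\}$, and let $$k'=\max\{k_1-\delta_2,\;k_2-\delta_1,\;\min\{k_2+\Delta_1,\,k_1+\Delta_2\}\}.$$ Then for every integer $k\in\{k',\dots,\Delta_1+\Delta_2\}$, the set $(S_1\times V_2)\cup(V_1\times S_2)$ is a $k$-oaf set in $G_1\times G_2$.
   Context: All graphs are finite and simple. For a graph $G=(V,E)$, a set $S\subseteq V$ and $v\in V$, let $\delta_S(v)=|\{u\in S: uv\in E\}|$, $\overline{S}=V\setminus S$, and let $\partial S$ be the set of vertices of $\overline S$ adjacent to at least one vertex of $S$. For an integer $k$, a non-empty set $S\subseteq V$ is an offensive $k$-alliance if $\delta_S(v)\ge \delta_{\overline S}(v)+k$ for every $v\in \partial S$. A set $X\subseteq V$ is an offensive $k$-alliance free set ($k$-oaf set) if no offensive $k$-alliance $S$ satisfies $S\subseteq X$. The Cartesian product $G_1\times G_2$ of $G_1=(V_1,E_1)$, $G_2=(V_2,E_2)$ has vertex set $V_1\times V_2$, with $(a,b)$ adjacent to $(c,d)$ iff either $a=c$ and $bd\in E_2$, or $b=d$ and $ac\in E_1$. *)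

theory Defs
  imports Main
begin

definition graph :: "'a set \<Rightarrow> ('a \<Rightarrow> 'a \<Rightarrow> bool) \<Rightarrow> bool" where
  "graph V E \<longleftrightarrow> finite V \<and> V \<noteq> {}
     \<and> (\<forall>u v. E u v \<longrightarrow> u \<in> V \<and> v \<in> V)
     \<and> (\<forall>u v. E u v \<longrightarrow> E v u)
     \<and> (\<forall>v. \<not> E v v)"

definition degree :: "'a set \<Rightarrow> ('a \<Rightarrow> 'a \<Rightarrow> bool) \<Rightarrow> 'a \<Rightarrow> nat" where
  "degree V E v = card {u \<in> V. E v u}"

definition min_degree :: "'a set \<Rightarrow> ('a \<Rightarrow> 'a \<Rightarrow> bool) \<Rightarrow> nat" where
  "min_degree V E = Min (degree V E ` V)"

definition max_degree :: "'a set \<Rightarrow> ('a \<Rightarrow> 'a \<Rightarrow> bool) \<Rightarrow> nat" where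
  "max_degree V E = Max (degree V E ` V)"

definition delta_in :: "('a \<Rightarrow> 'a \<Rightarrow> bool) \<Rightarrow> 'a set \<Rightarrow> 'a \<Rightarrow> nat" where
  "delta_in E S v = card {u \<in> S. E u v}"

definition boundary :: "'a set \<Rightarrow> ('a \<Rightarrow> 'a \<Rightarrow> bool) \<Rightarrow> 'a set \<Rightarrow> 'a set" where
  "boundary V E S = {v \<in> V - S. \<exists>u \<in> S. E u v}"

definition offensive_alliance :: "'a set \<Rightarrow> ('a \<Rightarrow> 'a \<Rightarrow> bool) \<Rightarrow> int \<Rightarrow> 'a set \<Rightarrow> bool" where
  "offensive_alliance V E k S \<longleftrightarrow> S \<noteq> {} \<and> S \<subseteq> V \<and>
     (\<forall>v \<in> boundary V E S. int (delta_in E S v) \<ge> int (delta_in E (V - S) v) + k)"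

definition oaf :: "'a set \<Rightarrow> ('a \<Rightarrow> 'a \<Rightarrow> bool) \<Rightarrow> int \<Rightarrow> 'a set \<Rightarrow> bool" where
  "oaf V E k X \<longleftrightarrow> X \<subseteq> V \<and> \<not> (\<exists>S. S \<subseteq> X \<and> offensive_alliance V E k S)"

definition prod_adj :: "('a \<Rightarrow> 'a \<Rightarrow> bool) \<Rightarrow> ('b \<Rightarrow> 'b \<Rightarrow> bool) \<Rightarrow> ('a \<times> 'b) \<Rightarrow> ('a \<times> 'b) \<Rightarrow> bool" where
  "prod_adj E1 E2 = (\<lambda>(a, b) (c, d). (a = c \<and> E2 b d) \<or> (b = d \<and> E1 a c))"

end

theory Submission
  imports Defs
begin

(* Let X = (S1 x V2) u (V1 x S2) and suppose an offensive k-alliance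
   S lies inside X in the product graph.  Counting neighbours of a product vertex
   (a,b) splits into its row {a} x V2 and its column V1 x {b}. *)

lemma delta_in_mono:
  assumes "finite B" "A \<subseteq> B"
  shows "delta_in E A v \<le> delta_in E B v"
  unfolding delta_in_def using assms by (intro card_mono) auto

lemma delta_in_complement:
  assumes "finite V" "T \<subseteq> V" "\<forall>u v. E u v \<longrightarrow> E v u"
  shows "delta_in E T a + delta_in E (V - T) a = degree V E a"
proof -
  have "{u \<in> V. E a u} = {u \<in> T. E u a} \<union> {u \<in> V - T. E u a}"
    using assms by blast
  moreover have "card ({u \<in> T. E u a} \<union> {u \<in> V - T. E u a})
      = card {u \<in> T. E u a} + card {u \<in> V - T. E u a}"
    using assms by (intro card_Un_disjoint) (auto intro: finite_subset)
  ultimately show ?thesis unfolding delta_in_def degree_def by simp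
qed

lemma degree_le_max_degree:
  assumes "graph V E" "v \<in> V"
  shows "degree V E v \<le> max_degree V E"
  using assms unfolding max_degree_def graph_def by auto

lemma min_degree_le_degree:
  assumes "graph V E" "v \<in> V"
  shows "min_degree V E \<le> degree V E v"
  using assms unfolding min_degree_def graph_def by auto

lemma prod_delta_in:
  assumes g1: "graph V1 E1" and g2: "graph V2 E2" and T: "T \<subseteq> V1 \<times> V2"
  shows "delta_in (prod_adj E1 E2) T (a, b)
      = delta_in E2 {d. (a, d) \<in> T} b + delta_in E1 {c. (c, b) \<in> T} a"
proof -
  have fT: "finite T" using g1 g2 T unfolding graph_def
    by (meson finite_SigmaI finite_subset)
  have irr: "\<not> E2 b b" using g2 unfolding graph_def by auto
  let ?A = "{d. (a, d) \<in> T \<and> E2 d b}"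
  let ?B = "{c. (c, b) \<in> T \<and> E1 c a}"
  have fA: "finite ?A"
    by (rule finite_subset[of _ "snd ` T"]) (use fT in force)+
  have fB: "finite ?B"
    by (rule finite_subset[of _ "fst ` T"]) (use fT in force)+
  have eq: "{u \<in> T. prod_adj E1 E2 u (a, b)} = Pair a ` ?A \<union> (\<lambda>c. (c, b)) ` ?B"
    unfolding prod_adj_def by auto
  have "card (Pair a ` ?A \<union> (\<lambda>c. (c, b)) ` ?B)
      = card (Pair a ` ?A) + card ((\<lambda>c. (c, b)) ` ?B)"
    using fA fB irr by (intro card_Un_disjoint) auto
  also have "\<dots> = card ?A + card ?B"
    by (subst card_image, simp add: inj_on_def)+ simp
  finally show ?thesis unfolding delta_in_def eq by simp
qed

lemma alliance_row_bound:
  assumes g1: "graph V1 E1" and g2: "graph V2 E2"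
    and al: "offensive_alliance (V1 \<times> V2) (prod_adj E1 E2) k S"
    and aV: "a \<in> V1" and ne: "{d. (a, d) \<in> S} \<noteq> {}"
    and no: "\<not> offensive_alliance V2 E2 k2 {d. (a, d) \<in> S}"
  shows "k < int (degree V1 E1 a) + k2"
proof -
  define Sa where "Sa = {d. (a, d) \<in> S}"
  have SV: "S \<subseteq> V1 \<times> V2" using al unfolding offensive_alliance_def by auto
  have "Sa \<subseteq> V2" using SV unfolding Sa_def by auto
  then obtain b where bB: "b \<in> boundary V2 E2 Sa"
    and viol: "int (delta_in E2 Sa b) < int (delta_in E2 (V2 - Sa) b) + k2"
    using ne no unfolding Sa_def offensive_alliance_def by force
  from bB obtain u where u: "b \<in> V2" "b \<notin> Sa" "u \<in> Sa" "E2 u b"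
    unfolding boundary_def by auto
  have "(a, b) \<in> boundary (V1 \<times> V2) (prod_adj E1 E2) S"
    unfolding boundary_def using u aV
    by (auto simp: Sa_def prod_adj_def intro!: bexI[of _ "(a, u)"])
  then have ineq: "int (delta_in (prod_adj E1 E2) S (a, b))
      \<ge> int (delta_in (prod_adj E1 E2) (V1 \<times> V2 - S) (a, b)) + k"
    using al unfolding offensive_alliance_def by auto
  define T where "T = {c. (c, b) \<in> S}"
  have row: "{d. (a, d) \<in> V1 \<times> V2 - S} = V2 - Sa"
    and col: "{c. (c, b) \<in> V1 \<times> V2 - S} = V1 - T"
    using aV u unfolding Sa_def T_def by auto
  have in_S: "delta_in (prod_adj E1 E2) S (a, b) = delta_in E2 Sa b + delta_in E1 T a"
    unfolding Sa_def T_def by (rule prod_delta_in[OF g1 g2 SV])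
  have out_S: "delta_in (prod_adj E1 E2) (V1 \<times> V2 - S) (a, b)
      = delta_in E2 (V2 - Sa) b + delta_in E1 (V1 - T) a"
    using prod_delta_in[OF g1 g2 Diff_subset[of "V1 \<times> V2" S], of a b] unfolding row col .
  have "delta_in E1 T a + delta_in E1 (V1 - T) a = degree V1 E1 a"
    using g1 SV unfolding graph_def T_def by (intro delta_in_complement) auto
  with ineq in_S out_S viol show ?thesis by linarith
qed

lemma alliance_projection_bound:
  assumes g1: "graph V1 E1" and g2: "graph V2 E2"
    and al: "offensive_alliance (V1 \<times> V2) (prod_adj E1 E2) k S"
    and no: "\<not> offensive_alliance V1 E1 k1 (fst ` S)"
  shows "\<exists>b\<in>V2. k + int (degree V2 E2 b) < k1"
proof -
  define P where "P = fst ` S"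
  have SV: "S \<subseteq> V1 \<times> V2" and "S \<noteq> {}" using al unfolding offensive_alliance_def by auto
  then have PV: "P \<subseteq> V1" and "P \<noteq> {}" unfolding P_def by auto
  then obtain a where aB: "a \<in> boundary V1 E1 P"
    and viol: "int (delta_in E1 P a) < int (delta_in E1 (V1 - P) a) + k1"
    using no unfolding P_def offensive_alliance_def by force
  from aB obtain c where c: "a \<in> V1" "a \<notin> P" "c \<in> P" "E1 c a"
    unfolding boundary_def by auto
  then obtain b where cb: "(c, b) \<in> S" unfolding P_def by force
  have bV: "b \<in> V2" using cb SV by auto
  have row_empty: "{d. (a, d) \<in> S} = {}" using c unfolding P_def by force
  have "(a, b) \<in> boundary (V1 \<times> V2) (prod_adj E1 E2) S"
    unfolding boundary_def using c bV row_empty cb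
    by (auto simp: prod_adj_def intro!: bexI[of _ "(c, b)"])
  then have ineq: "int (delta_in (prod_adj E1 E2) S (a, b))
      \<ge> int (delta_in (prod_adj E1 E2) (V1 \<times> V2 - S) (a, b)) + k"
    using al unfolding offensive_alliance_def by auto
  define T where "T = {c. (c, b) \<in> S}"
  have row: "{d. (a, d) \<in> V1 \<times> V2 - S} = V2"
    and col: "{c. (c, b) \<in> V1 \<times> V2 - S} = V1 - T"
    using c bV row_empty unfolding T_def by auto
  have in_S: "delta_in (prod_adj E1 E2) S (a, b) = delta_in E1 T a"
    using prod_delta_in[OF g1 g2 SV, of a b] unfolding row_empty T_def
    by (simp add: delta_in_def)
  have out_S: "delta_in (prod_adj E1 E2) (V1 \<times> V2 - S) (a, b)
      = delta_in E2 V2 b + delta_in E1 (V1 - T) a"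
    using prod_delta_in[OF g1 g2 Diff_subset[of "V1 \<times> V2" S], of a b] unfolding row col .
  have "delta_in E2 {} b + delta_in E2 (V2 - {}) b = degree V2 E2 b"
    using g2 unfolding graph_def by (intro delta_in_complement) auto
  then have deg2: "delta_in E2 V2 b = degree V2 E2 b" by (simp add: delta_in_def)
  have "T \<subseteq> P" unfolding T_def P_def by force
  then have "delta_in E1 T a \<le> delta_in E1 P a" "delta_in E1 (V1 - P) a \<le> delta_in E1 (V1 - T) a"
    using g1 PV unfolding graph_def by (auto intro!: delta_in_mono intro: finite_subset)
  with ineq in_S out_S deg2 viol bV show ?thesis by force
qed

lemma oaf_product_one_sided:
  assumes g1: "graph V1 E1" and g2: "graph V2 E2"
    and o1: "oaf V1 E1 k1 S1" and o2: "oaf V2 E2 k2 S2"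
    and row: "k2 + int (max_degree V1 E1) \<le> k"
    and col: "k1 - int (min_degree V2 E2) \<le> k"
  shows "oaf (V1 \<times> V2) (prod_adj E1 E2) k ((S1 \<times> V2) \<union> (V1 \<times> S2))"
  unfolding oaf_def
proof (intro conjI notI)
  show "S1 \<times> V2 \<union> V1 \<times> S2 \<subseteq> V1 \<times> V2" using o1 o2 unfolding oaf_def by auto
next
  assume "\<exists>S. S \<subseteq> S1 \<times> V2 \<union> V1 \<times> S2 \<and> offensive_alliance (V1 \<times> V2) (prod_adj E1 E2) k S"
  then obtain S where SX: "S \<subseteq> S1 \<times> V2 \<union> V1 \<times> S2"
    and al: "offensive_alliance (V1 \<times> V2) (prod_adj E1 E2) k S" by blast
  show False
  proof (cases "fst ` S \<subseteq> S1")
    case True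
    then have "\<not> offensive_alliance V1 E1 k1 (fst ` S)" using o1 unfolding oaf_def by auto
    then obtain b where "b \<in> V2" "k + int (degree V2 E2 b) < k1"
      using alliance_projection_bound[OF g1 g2 al] by blast
    with min_degree_le_degree[OF g2] col show False by force
  next
    case False
    then obtain a b0 where ab0: "(a, b0) \<in> S" "a \<notin> S1" by force
    have aV: "a \<in> V1" using ab0 al unfolding offensive_alliance_def by auto
    have "{d. (a, d) \<in> S} \<subseteq> S2" using SX ab0 by auto
    then have "\<not> offensive_alliance V2 E2 k2 {d. (a, d) \<in> S}" using o2 unfolding oaf_def by auto
    with alliance_row_bound[OF g1 g2 al aV] ab0 have "k < int (degree V1 E1 a) + k2" by blast
    with degree_le_max_degree[OF g1 aV] row show False by linarith
  qed
qed

lemma boundary_image: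
  assumes "inj f" and adj: "\<And>u v. E' (f u) (f v) = E u v"
  shows "boundary (f ` V) E' (f ` S) = f ` boundary V E S"
  unfolding boundary_def using assms(1) by (auto simp: adj inj_image_mem_iff dest: injD)

lemma delta_in_image:
  assumes "inj f" and adj: "\<And>u v. E' (f u) (f v) = E u v"
  shows "delta_in E' (f ` T) (f v) = delta_in E T v"
proof -
  have "{u \<in> f ` T. E' u (f v)} = f ` {u \<in> T. E u v}" by (auto simp: adj)
  then show ?thesis unfolding delta_in_def using assms(1) by (simp add: card_image inj_on_subset)
qed

lemma offensive_alliance_image:
  assumes "inj f" and adj: "\<And>u v. E' (f u) (f v) = E u v"
    and "offensive_alliance V E k S"
  shows "offensive_alliance (f ` V) E' k (f ` S)"
proof -
  have "f ` V - f ` S = f ` (V - S)" using assms(1) by (simp add: image_set_diff)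
  then show ?thesis using assms unfolding offensive_alliance_def
    by (auto simp: boundary_image delta_in_image)
qed

lemma prod_adj_swap: "prod_adj E2 E1 (prod.swap u) (prod.swap v) = prod_adj E1 E2 u v"
  by (cases u; cases v) (auto simp: prod_adj_def)

lemma oaf_product_swap:
  assumes "oaf (V2 \<times> V1) (prod_adj E2 E1) k ((S2 \<times> V1) \<union> (V2 \<times> S1))"
  shows "oaf (V1 \<times> V2) (prod_adj E1 E2) k ((S1 \<times> V2) \<union> (V1 \<times> S2))"
  unfolding oaf_def
proof (intro conjI notI)
  show "S1 \<times> V2 \<union> V1 \<times> S2 \<subseteq> V1 \<times> V2" using assms unfolding oaf_def by auto
next
  assume "\<exists>S. S \<subseteq> S1 \<times> V2 \<union> V1 \<times> S2 \<and> offensive_alliance (V1 \<times> V2) (prod_adj E1 E2) k S"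
  then obtain S where "S \<subseteq> S1 \<times> V2 \<union> V1 \<times> S2"
    and "offensive_alliance (V1 \<times> V2) (prod_adj E1 E2) k S" by blast
  then have "prod.swap ` S \<subseteq> S2 \<times> V1 \<union> V2 \<times> S1"
    and "offensive_alliance (V2 \<times> V1) (prod_adj E2 E1) k (prod.swap ` S)"
    using offensive_alliance_image[where f = prod.swap and E' = "prod_adj E2 E1"
        and E = "prod_adj E1 E2" and V = "V1 \<times> V2", OF inj_swap prod_adj_swap]
    by (auto simp: product_swap)
  with assms show False unfolding oaf_def by blast
qed

theorem theorem4:
  fixes V1 :: "'a set" and E1 :: "'a \<Rightarrow> 'a \<Rightarrow> bool"
    and V2 :: "'b set" and E2 :: "'b \<Rightarrow> 'b \<Rightarrow> bool"
    and S1 :: "'a set" and S2 :: "'b set" and k1 k2 k :: int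
  assumes "graph V1 E1" and "graph V2 E2"
    and "oaf V1 E1 k1 S1" and "oaf V2 E2 k2 S2"
    and "max (k1 - int (min_degree V2 E2))
           (max (k2 - int (min_degree V1 E1))
                (min (k2 + int (max_degree V1 E1)) (k1 + int (max_degree V2 E2)))) \<le> k"
    and "k \<le> int (max_degree V1 E1) + int (max_degree V2 E2)"
  shows "oaf (V1 \<times> V2) (prod_adj E1 E2) k ((S1 \<times> V2) \<union> (V1 \<times> S2))"
proof (cases "k2 + int (max_degree V1 E1) \<le> k")
  case True
  then show ?thesis using oaf_product_one_sided[OF assms(1-4)] assms(5) by simp
next
  case False
  then have "k1 + int (max_degree V2 E2) \<le> k" using assms(5) by linarith
  then have "oaf (V2 \<times> V1) (prod_adj E2 E1) k ((S2 \<times> V1) \<union> (V2 \<times> S1))"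
    using oaf_product_one_sided[OF assms(2,1,4,3)] assms(5) by simp
  then show ?thesis by (rule oaf_product_swap)
qed

end
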